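(* For every graph $G$ and integer $k$, every execution path of naive-fvs$(G,k,\emptyset)$ that leads to a solution satisfies $|F'|\le 3|V_-|$.
   Context: All graphs are finite, simple and undirected; $d_G(v)$ denotes the degree of $v$ in $G$, $G-S$ denotes deletion of a vertex set $S$, and $G[S]$ the induced subgraph. A feedback vertex set of $G$ is a set $V_-\subseteq V(G)$ such that $G-V_-$ is a forest. Algorithm naive-fvs$(G,k,F)$ (with $k$ an integer and $F\subseteq V(G)$ inducing a forest) returns a set of vertices or ``NO'' as follows (all choices among several candidates are arbitrary; degrees are in the current graph $G$): (0) If $k<0$ return NO; if $V(G)=\emptyset$ return $\emptyset$. (1) If some vertex $v$ has degree less than $2$, return naive-fvs$(G-\{v\},k,F\setminus\{v\})$. (2) If some $v\in V(G)\setminus F$ has two neighbors in the same connected component of $G[F]$, let $X=$ naive-fvs$(G-\{v\},k-1,F)$ and return $X\cup\{v\}$ (NO if $X$ is NO). (3) Pick $v\in V(G)\setminus F$ of maximum degree. (4) If $d(v)=2$: set $X=\emptyset$; while $G$ contains a cycle $C$, take any vertex $x$ of $C$ not in $F$, add $x$ to $X$ and delete $x$ from $G$; then return $X$ if $|X|\le k$, else NO. (5) Let $X=$ naive-fvs$(G-\{v\},k-1,F)$; if $X$ is not NO, return $X\cup\{v\}$. (6) Return naive-fvs$(G,k,F\cup\{v\})$. An execution path is a sequence of calls $c_0,c_1,\dots,c_t$ where $c_0=$ naive-fvs$(G,k,\emptyset)$; for each $j<t$, $c_{j+1}$ is the recursive call made by $c_j$ in step 1 or step 2, or, if $c_j$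 reaches step 5, either the call of step 5 or the call of step 6 (the latter considered even if the algorithm would not actually make it); and $c_t$ terminates in step 0 or step 4 without recursion. It leads to a solution if $c_t$ returns a set (not NO). $V_-$ denotes the set of vertices deleted along the path in step 2, in step 5 (when the path follows the step-5 call), and in the loop of step 4 of $c_t$; $F'$ denotes the set of vertices added to $F$ by step 6 (when the path follows the step-6 call). *)

theory Defs
  imports Main
begin

type_synonym 'a graph = "'a set \<times> 'a set set"

definition verts :: "'a graph \<Rightarrow> 'a set" where "verts G = fst G"
definition edges :: "'a graph \<Rightarrow> 'a set set" where "edges G = snd G"

definition simple_graph :: "'a graph \<Rightarrow> bool" where
  "simple_graph G \<longleftrightarrow> finite (verts G) \<and>
     (\<forall>e \<in> edges G. \<exists>u w. u \<noteq> w \<and> u \<in> verts G \<and> w \<in> verts G \<and> e = {u, w})"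

definition del_verts :: "'a graph \<Rightarrow> 'a set \<Rightarrow> 'a graph" where
  "del_verts G S = (verts G - S, {e \<in> edges G. e \<inter> S = {}})"

definition adj :: "'a graph \<Rightarrow> 'a \<Rightarrow> 'a \<Rightarrow> bool" where
  "adj G u w \<longleftrightarrow> {u, w} \<in> edges G"

definition deg :: "'a graph \<Rightarrow> 'a \<Rightarrow> nat" where
  "deg G v = card {e \<in> edges G. v \<in> e}"

definition same_comp :: "'a graph \<Rightarrow> 'a set \<Rightarrow> 'a \<Rightarrow> 'a \<Rightarrow> bool" where
  "same_comp G F u w \<longleftrightarrow> u \<in> F \<and> w \<in> F \<and>
     (u, w) \<in> {(a, b). a \<in> F \<and> b \<in> F \<and> adj G a b}\<^sup>*"

definition two_nbrs_same_comp :: "'a graph \<Rightarrow> 'a set \<Rightarrow> 'a \<Rightarrow> bool" where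
  "two_nbrs_same_comp G F v \<longleftrightarrow>
     (\<exists>u w. u \<noteq> w \<and> adj G v u \<and> adj G v w \<and> same_comp G F u w)"

definition is_cycle :: "'a graph \<Rightarrow> 'a list \<Rightarrow> bool" where
  "is_cycle G C \<longleftrightarrow> length C \<ge> 3 \<and> distinct C \<and> set C \<subseteq> verts G \<and>
     (\<forall>i < length C. adj G (C ! i) (C ! ((i + 1) mod length C)))"

definition has_cycle :: "'a graph \<Rightarrow> bool" where
  "has_cycle G \<longleftrightarrow> (\<exists>C. is_cycle G C)"

text \<open>Possible outcomes X of the loop of step 4 (with F fixed).\<close>
inductive loop_result :: "'a graph \<Rightarrow> 'a set \<Rightarrow> 'a set \<Rightarrow> bool" where
  loop_stop: "\<not> has_cycle G \<Longrightarrow> loop_result G F {}"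
| loop_step: "is_cycle G C \<Longrightarrow> x \<in> set C \<Longrightarrow> x \<notin> F \<Longrightarrow>
     loop_result (del_verts G {x}) F X \<Longrightarrow> loop_result G F (insert x X)"

definition reaches_step3 :: "'a graph \<Rightarrow> int \<Rightarrow> 'a set \<Rightarrow> 'a \<Rightarrow> bool" where
  "reaches_step3 G k F v \<longleftrightarrow> k \<ge> 0 \<and> verts G \<noteq> {} \<and>
     (\<forall>u \<in> verts G. deg G u \<ge> 2) \<and>
     (\<forall>u \<in> verts G - F. \<not> two_nbrs_same_comp G F u) \<and>
     v \<in> verts G - F \<and> (\<forall>u \<in> verts G - F. deg G u \<le> deg G v)"

text \<open>sol_path G k F Vm Fp: there is an execution path starting with the call
  naive-fvs(G,k,F) that leads to a solution, along which the set of deleted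
  vertices (V_-) is Vm and the set of vertices added to F by step 6 (F') is Fp.\<close>
inductive sol_path :: "'a graph \<Rightarrow> int \<Rightarrow> 'a set \<Rightarrow> 'a set \<Rightarrow> 'a set \<Rightarrow> bool" where
  step0: "k \<ge> 0 \<Longrightarrow> verts G = {} \<Longrightarrow> sol_path G k F {} {}"
| step1: "k \<ge> 0 \<Longrightarrow> v \<in> verts G \<Longrightarrow> deg G v < 2 \<Longrightarrow>
     sol_path (del_verts G {v}) k (F - {v}) Vm Fp \<Longrightarrow> sol_path G k F Vm Fp"
| step2: "k \<ge> 0 \<Longrightarrow> verts G \<noteq> {} \<Longrightarrow> (\<forall>u \<in> verts G. deg G u \<ge> 2) \<Longrightarrow>
     v \<in> verts G - F \<Longrightarrow> two_nbrs_same_comp G F v \<Longrightarrow>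
     sol_path (del_verts G {v}) (k - 1) F Vm Fp \<Longrightarrow> sol_path G k F (insert v Vm) Fp"
| step4: "reaches_step3 G k F v \<Longrightarrow> deg G v = 2 \<Longrightarrow> loop_result G F X \<Longrightarrow>
     int (card X) \<le> k \<Longrightarrow> sol_path G k F X {}"
| step5: "reaches_step3 G k F v \<Longrightarrow> deg G v \<noteq> 2 \<Longrightarrow>
     sol_path (del_verts G {v}) (k - 1) F Vm Fp \<Longrightarrow> sol_path G k F (insert v Vm) Fp"
| step6: "reaches_step3 G k F v \<Longrightarrow> deg G v \<noteq> 2 \<Longrightarrow>
     sol_path G k (insert v F) Vm Fp \<Longrightarrow> sol_path G k F Vm (insert v Fp)"

end

theory Submission
  imports Defs
begin

text \<open>Weigh a vertex x of degree d by d - 2 if x \<in> F and by min 0 (d - 2) otherwise, and let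
  \<Phi>(G, F) be the total weight. If all vertices outside F have degree at most m + 2, where m \<ge> 1,
  then every path from (G, k, F) that leads to a solution satisfies m|F'| + \<Phi>(G, F) \<le> 3m|V_-|.
  Deleting a vertex of degree below 2 does not decrease \<Phi>, and deleting a vertex outside F lowers
  it by at most its degree, which is at most m + 2 \<le> 3m. In step 4 every vertex outside F has
  degree 2, so \<Phi> is the sum of d(x) - 2; each deletion of the loop lowers this sum by at most 2,
  and on a forest it is nonpositive. In step 6 the branching vertex v, of maximum degree d, raises
  \<Phi> by exactly d - 2, and the bound for m = d - 2 together with \<Phi> \<ge> 0 (all degrees are at
  least 2 there) yields it for every m \<ge> d - 2. From F = {} step 2 cannot occur before the first
  step 6, and there \<Phi>(G, {v}) = d - 2.\<close>

lemma verts_del_verts [simp]: "verts (del_verts G S) = verts G - S"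
  by (simp add: del_verts_def verts_def)

lemma edges_del_verts [simp]: "edges (del_verts G S) = {e \<in> edges G. e \<inter> S = {}}"
  by (simp add: del_verts_def edges_def)

lemma simple_graph_del_verts: "simple_graph G \<Longrightarrow> simple_graph (del_verts G S)"
  unfolding simple_graph_def by fastforce

lemma finite_verts: "simple_graph G \<Longrightarrow> finite (verts G)"
  by (simp add: simple_graph_def)

lemma finite_edges: "simple_graph G \<Longrightarrow> finite (edges G)"
proof -
  assume "simple_graph G"
  then have "edges G \<subseteq> Pow (verts G)" and "finite (verts G)"
    unfolding simple_graph_def by auto
  then show ?thesis by (simp add: finite_subset)
qed

lemma edge_eq_doubleton:
  "simple_graph G \<Longrightarrow> e \<in> edges G \<Longrightarrow> x \<in> e \<Longrightarrow> y \<in> e \<Longrightarrow> x \<noteq> y \<Longrightarrow> e = {x, y}"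
  unfolding simple_graph_def by fastforce

lemma deg_del_verts:
  assumes sg: "simple_graph G" and "x \<noteq> y"
  shows "deg G x = deg (del_verts G {y}) x + (if adj G x y then 1 else 0)"
proof -
  let ?A = "{e \<in> edges G. x \<in> e}"
  have "finite ?A" using finite_edges[OF sg] by simp
  have "{e \<in> edges (del_verts G {y}). x \<in> e} = ?A - {{x, y}}"
    using edge_eq_doubleton[OF sg _ _ _ \<open>x \<noteq> y\<close>] by auto
  moreover have "card ?A = card (?A - {{x, y}}) + (if {x, y} \<in> edges G then 1 else 0)"
    using \<open>finite ?A\<close> card_Suc_Diff1[of ?A "{x, y}"] by auto
  ultimately show ?thesis
    unfolding deg_def adj_def by simp
qed

lemma deg_del_verts_le: "simple_graph G \<Longrightarrow> deg (del_verts G {y}) x \<le> deg G x"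
  unfolding deg_def by (rule card_mono) (auto dest: finite_edges)

lemma card_neighbours:
  assumes sg: "simple_graph G"
  shows "card {x \<in> verts G - {y}. adj G x y} = deg G y"
proof -
  have "bij_betw (\<lambda>x. {x, y}) {x \<in> verts G - {y}. adj G x y} {e \<in> edges G. y \<in> e}"
  proof (rule bij_betwI')
    fix e assume e: "e \<in> {e \<in> edges G. y \<in> e}"
    then obtain u w where "u \<noteq> w" "u \<in> verts G" "w \<in> verts G" "e = {u, w}"
      using sg unfolding simple_graph_def by blast
    with e show "\<exists>x \<in> {x \<in> verts G - {y}. adj G x y}. e = {x, y}"
      unfolding adj_def by (auto simp: insert_commute)
  next
    fix a b assume "a \<in> {x \<in> verts G - {y}. adj G x y}" "b \<in> {x \<in> verts G - {y}. adj G x y}"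
    then show "({a, y} = {b, y}) = (a = b)" by (metis DiffD2 insertE insertI1 mem_Collect_eq)
  qed (simp add: adj_def)
  then show ?thesis unfolding deg_def by (simp add: bij_betw_same_card)
qed

lemma sum_deg_del_verts_le:
  fixes g :: "'a \<Rightarrow> int \<Rightarrow> int"
  assumes sg: "simple_graph G" and y: "y \<in> verts G"
    and step: "\<And>x d. g x d \<le> g x (d - 1) + 1"
  shows "(\<Sum>x\<in>verts G. g x (int (deg G x))) \<le> g y (int (deg G y)) + int (deg G y)
           + (\<Sum>x\<in>verts (del_verts G {y}). g x (int (deg (del_verts G {y}) x)))"
proof -
  let ?G' = "del_verts G {y}"
  have fin: "finite (verts G)" using finite_verts[OF sg] .
  have "g x (int (deg G x)) \<le> g x (int (deg ?G' x)) + (if adj G x y then 1 else 0)"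
    if "x \<in> verts G - {y}" for x
    using deg_del_verts[OF sg, of x y] that step[of x "int (deg G x)"] by auto
  then have "(\<Sum>x\<in>verts G - {y}. g x (int (deg G x)))
      \<le> (\<Sum>x\<in>verts G - {y}. g x (int (deg ?G' x))) + (\<Sum>x\<in>verts G - {y}. if adj G x y then 1 else 0)"
    unfolding sum.distrib[symmetric] by (rule sum_mono) simp
  also have "(\<Sum>x\<in>verts G - {y}. if adj G x y then 1 else 0 :: int)
      = int (card {x \<in> verts G - {y}. adj G x y})"
    using fin by (simp add: sum.If_cases Int_def)
  also have "\<dots> = int (deg G y)" using card_neighbours[OF sg] by simp
  finally show ?thesis
    using sum.remove[OF fin y, of "\<lambda>x. g x (int (deg G x))"] by simp
qed

definition is_path :: "'a graph \<Rightarrow> 'a list \<Rightarrow> bool" where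
  "is_path G p \<longleftrightarrow> p \<noteq> [] \<and> distinct p \<and> set p \<subseteq> verts G \<and>
     (\<forall>i. Suc i < length p \<longrightarrow> adj G (p ! i) (p ! Suc i))"

lemma is_path_Cons:
  "is_path G p \<Longrightarrow> u \<in> verts G \<Longrightarrow> u \<notin> set p \<Longrightarrow> adj G u (p ! 0) \<Longrightarrow> is_path G (u # p)"
  unfolding is_path_def by (auto simp: nth_Cons split: nat.split)

lemma ex_longest_path:
  assumes "finite (verts G)" and "verts G \<noteq> {}"
  obtains p where "is_path G p" and "\<And>q. is_path G q \<Longrightarrow> length q \<le> length p"
proof -
  obtain x where "x \<in> verts G" using assms(2) by blast
  then have "is_path G [x]" by (simp add: is_path_def)
  moreover have "length q < Suc (card (verts G))" if "is_path G q" for q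
  proof -
    have "distinct q" "set q \<subseteq> verts G" using that unfolding is_path_def by auto
    then show ?thesis using card_mono[OF assms(1), of "set q"] distinct_card[of q] by simp
  qed
  ultimately show ?thesis
    using that Lattices_Big.ex_has_greatest_nat[of "is_path G" "[x]" length] by meson
qed

lemma is_cycle_take_back_edge:
  assumes p: "is_path G p" and j: "2 \<le> j" "j < length p" and closing: "adj G (p ! j) (p ! 0)"
  shows "is_cycle G (take (Suc j) p)"
  unfolding is_cycle_def
proof (intro conjI allI impI)
  let ?C = "take (Suc j) p"
  show "3 \<le> length ?C" "distinct ?C" "set ?C \<subseteq> verts G"
    using p j unfolding is_path_def by (auto dest: in_set_takeD)
  fix i assume "i < length ?C"
  then consider "i < j" | "i = j" using j by fastforce
  then show "adj G (?C ! i) (?C ! ((i + 1) mod length ?C))"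
  proof cases
    case 1 with p j show ?thesis unfolding is_path_def by simp
  next
    case 2 with closing j show ?thesis by simp
  qed
qed

lemma has_cycle_if_min_deg_ge_2:
  assumes sg: "simple_graph G" and "verts G \<noteq> {}" and min_deg: "\<forall>x\<in>verts G. 2 \<le> deg G x"
  shows "has_cycle G"
proof -
  obtain p where p: "is_path G p" and longest: "\<And>q. is_path G q \<Longrightarrow> length q \<le> length p"
    using ex_longest_path[OF finite_verts[OF sg] assms(2)] by blast
  let ?x = "p ! 0" and ?N = "{u \<in> verts G - {p ! 0}. adj G u (p ! 0)}"
  have "?x \<in> verts G" using p unfolding is_path_def by auto
  have on_path: "u \<in> set p" if "u \<in> ?N" for u
    using that longest[OF is_path_Cons[OF p]] by fastforce
  have "2 \<le> card ?N" using card_neighbours[OF sg] min_deg \<open>?x \<in> verts G\<close> by simp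
  then have "\<not> ?N \<subseteq> {p ! 1}" using card_mono[of "{p ! 1}" ?N] by auto
  then obtain u where u: "u \<in> ?N" "u \<noteq> p ! 1" by blast
  then obtain j where j: "j < length p" "p ! j = u" using on_path by (meson in_set_conv_nth)
  with u have "j \<noteq> 0" "j \<noteq> 1" by force+
  then have "2 \<le> j" by linarith
  then have "is_cycle G (take (Suc j) p)"
    using is_cycle_take_back_edge[OF p _ j(1)] j u by simp
  then show ?thesis unfolding has_cycle_def by blast
qed

lemma has_cycle_del_verts: "has_cycle (del_verts G S) \<Longrightarrow> has_cycle G"
  unfolding has_cycle_def is_cycle_def adj_def by auto

lemma free_deg_bound_del_verts:
  assumes "simple_graph G" and "\<forall>x\<in>verts G - F. deg G x \<le> b"
  shows "\<forall>x\<in>verts (del_verts G {y}) - F. deg (del_verts G {y}) x \<le> b"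
  using assms(2) deg_del_verts_le[OF assms(1), of y] by (auto intro: le_trans)

lemma card_insert_del_verts:
  "simple_graph G \<Longrightarrow> A \<subseteq> verts (del_verts G {v}) \<Longrightarrow> card (insert v A) = Suc (card A)"
proof -
  assume "simple_graph G" and A: "A \<subseteq> verts (del_verts G {v})"
  then have "finite A" using finite_verts[of G] finite_subset by auto
  moreover have "v \<notin> A" using A by auto
  ultimately show ?thesis by simp
qed

lemma sum_deg_minus_2_nonpos_if_acyclic:
  "simple_graph G \<Longrightarrow> \<not> has_cycle G \<Longrightarrow> (\<Sum>x\<in>verts G. int (deg G x) - 2) \<le> 0"
proof (induction "card (verts G)" arbitrary: G rule: less_induct)
  case less
  show ?case
  proof (cases "\<exists>y\<in>verts G. deg G y < 2")
    case True
    then obtain y where y: "y \<in> verts G" "deg G y < 2" by blast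
    let ?G' = "del_verts G {y}"
    have "card (verts ?G') < card (verts G)"
      using card_Diff1_less[OF finite_verts[OF less.prems(1)] y(1)] by simp
    moreover have "simple_graph ?G'" "\<not> has_cycle ?G'"
      using less.prems simple_graph_del_verts has_cycle_del_verts by blast+
    ultimately have "(\<Sum>x\<in>verts ?G'. int (deg ?G' x) - 2) \<le> 0"
      using less.hyps by blast
    then show ?thesis
      using sum_deg_del_verts_le[OF less.prems(1) y(1), of "\<lambda>x d. d - 2"] y(2) by simp
  next
    case False
    then show ?thesis
      using has_cycle_if_min_deg_ge_2[OF less.prems(1)] less.prems(2) by force
  qed
qed

lemma loop_result_subset: "loop_result G F X \<Longrightarrow> X \<subseteq> verts G"
  by (induction rule: loop_result.induct) (auto simp: is_cycle_def)

lemma sum_deg_minus_2_le_loop_result: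
  "loop_result G F X \<Longrightarrow> simple_graph G \<Longrightarrow> \<forall>x\<in>verts G - F. deg G x \<le> 2 \<Longrightarrow>
     (\<Sum>x\<in>verts G. int (deg G x) - 2) \<le> 2 * int (card X)"
proof (induction rule: loop_result.induct)
  case (loop_stop G F)
  then show ?case using sum_deg_minus_2_nonpos_if_acyclic by simp
next
  case (loop_step G C x F X)
  let ?G' = "del_verts G {x}"
  have x: "x \<in> verts G - F" using loop_step.hyps(1-3) unfolding is_cycle_def by auto
  have "(\<Sum>z\<in>verts ?G'. int (deg ?G' z) - 2) \<le> 2 * int (card X)"
    using loop_step.IH simple_graph_del_verts[OF loop_step.prems(1)]
      free_deg_bound_del_verts[OF loop_step.prems] by blast
  moreover have "deg G x \<le> 2" using x loop_step.prems(2) by blast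
  moreover have "card (insert x X) = Suc (card X)"
    using card_insert_del_verts[OF loop_step.prems(1) loop_result_subset[OF loop_step.hyps(4)]] .
  ultimately show ?case
    using sum_deg_del_verts_le[OF loop_step.prems(1), of x "\<lambda>x d. d - 2"] x by simp
qed

definition weight :: "'a set \<Rightarrow> 'a \<Rightarrow> int \<Rightarrow> int" where
  "weight F x d = (if x \<in> F then d - 2 else min 0 (d - 2))"

definition potential :: "'a graph \<Rightarrow> 'a set \<Rightarrow> int" where
  "potential G F = (\<Sum>x\<in>verts G. weight F x (int (deg G x)))"

lemma potential_del_verts_le:
  "simple_graph G \<Longrightarrow> y \<in> verts G \<Longrightarrow>
     potential G F \<le> weight F y (int (deg G y)) + int (deg G y) + potential (del_verts G {y}) F"
  unfolding potential_def by (rule sum_deg_del_verts_le) (auto simp: weight_def)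

lemma potential_del_low_deg:
  assumes "simple_graph G" "y \<in> verts G" "deg G y < 2"
  shows "potential G F \<le> potential (del_verts G {y}) (F - {y})"
proof -
  have "potential (del_verts G {y}) (F - {y}) = potential (del_verts G {y}) F"
    unfolding potential_def by (rule sum.cong) (auto simp: weight_def)
  then show ?thesis
    using potential_del_verts_le[OF assms(1,2), of F] assms(3)
    by (simp add: weight_def min_def split: if_splits)
qed

lemma potential_del_free:
  "simple_graph G \<Longrightarrow> y \<in> verts G - F \<Longrightarrow>
     potential G F \<le> potential (del_verts G {y}) F + int (deg G y)"
  using potential_del_verts_le[of G y F] by (simp add: weight_def)

lemma potential_insert:
  assumes "finite (verts G)" "y \<in> verts G - F" "2 \<le> deg G y"
  shows "potential G (insert y F) = potential G F + (int (deg G y) - 2)"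
proof -
  have "potential G F' = weight F' y (int (deg G y)) + (\<Sum>x\<in>verts G - {y}. weight F' x (int (deg G x)))"
    for F'
    unfolding potential_def using sum.remove[OF assms(1)] assms(2) by blast
  moreover have "(\<Sum>x\<in>verts G - {y}. weight (insert y F) x (int (deg G x)))
      = (\<Sum>x\<in>verts G - {y}. weight F x (int (deg G x)))"
    by (rule sum.cong) (auto simp: weight_def)
  ultimately show ?thesis using assms(2,3) by (simp add: weight_def)
qed

lemma potential_nonneg: "\<forall>x\<in>verts G. 2 \<le> deg G x \<Longrightarrow> 0 \<le> potential G F"
  unfolding potential_def by (rule sum_nonneg) (auto simp: weight_def)

lemma potential_empty: "\<forall>x\<in>verts G. 2 \<le> deg G x \<Longrightarrow> potential G {} = 0"
  unfolding potential_def by (rule sum.neutral) (auto simp: weight_def)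

lemma potential_le_loop_result:
  assumes "loop_result G F X" "simple_graph G"
    and "\<forall>x\<in>verts G. 2 \<le> deg G x" and "\<forall>x\<in>verts G - F. deg G x \<le> 2"
  shows "potential G F \<le> 2 * int (card X)"
proof -
  have "potential G F = (\<Sum>x\<in>verts G. int (deg G x) - 2)"
    unfolding potential_def using assms(3,4) by (intro sum.cong) (force simp: weight_def)+
  then show ?thesis using sum_deg_minus_2_le_loop_result[OF assms(1,2,4)] by simp
qed

lemma sol_path_subset: "sol_path G k F Vm Fp \<Longrightarrow> Vm \<subseteq> verts G"
  by (induction rule: sol_path.induct) (auto dest: loop_result_subset simp: reaches_step3_def)

lemma budget_scale_mono:
  fixes d m n b P :: int
  assumes "0 \<le> P" "0 < d" "d \<le> m" "d * n + P \<le> d * b"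
  shows "m * n + P \<le> m * b"
proof -
  have "P \<le> d * (b - n)" using assms(4) by (simp add: algebra_simps)
  then have "0 \<le> b - n" using assms(1,2) zero_le_mult_iff[of d "b - n"] by linarith
  then have "d * (b - n) \<le> m * (b - n)" using assms(3) by (simp add: mult_right_mono)
  then show ?thesis using \<open>P \<le> d * (b - n)\<close> by (simp add: algebra_simps)
qed

lemma potential_bound_del_free_vertex:
  fixes m :: nat
  assumes sg: "simple_graph G" and v: "v \<in> verts G - F" "deg G v \<le> m + 2" and "1 \<le> m"
    and "Vm \<subseteq> verts (del_verts G {v})"
    and bound: "int m * int (card Fp) + potential (del_verts G {v}) F \<le> 3 * int m * int (card Vm)"
  shows "int m * int (card Fp) + potential G F \<le> 3 * int m * int (card (insert v Vm))"
proof -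
  have "potential G F \<le> potential (del_verts G {v}) F + 3 * int m"
    using potential_del_free[OF sg v(1)] v(2) \<open>1 \<le> m\<close> by linarith
  moreover have "card (insert v Vm) = Suc (card Vm)"
    using card_insert_del_verts[OF sg \<open>Vm \<subseteq> _\<close>] .
  ultimately show ?thesis using bound by (simp add: algebra_simps)
qed

lemma potential_bound_branch_vertex:
  fixes d m :: nat
  assumes fin: "finite (verts G)" and v: "v \<in> verts G - F" "deg G v = d + 2"
    and "1 \<le> d" "d \<le> m" and min_deg: "\<forall>x\<in>verts G. 2 \<le> deg G x"
    and bound: "int d * int (card Fp) + potential G (insert v F) \<le> 3 * int d * int (card Vm)"
  shows "int m * int (card (insert v Fp)) + potential G F \<le> 3 * int m * int (card Vm)"
proof -
  have "potential G (insert v F) = potential G F + int d"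
    using potential_insert[OF fin v(1)] v(2) by simp
  with bound have "int d * (int (card Fp) + 1) + potential G F \<le> int d * (3 * int (card Vm))"
    by (simp add: algebra_simps)
  then have "int m * (int (card Fp) + 1) + potential G F \<le> int m * (3 * int (card Vm))"
    using budget_scale_mono[OF potential_nonneg[OF min_deg, of F], of "int d" "int m"]
      \<open>1 \<le> d\<close> \<open>d \<le> m\<close> by simp
  moreover have "int m * int (card (insert v Fp)) \<le> int m * (int (card Fp) + 1)"
    using card_insert_le_m1[of "Suc (card Fp)" Fp v] by (simp add: mult_left_mono)
  ultimately show ?thesis by (simp add: algebra_simps)
qed

lemma sol_path_potential_bound:
  fixes m :: nat
  assumes "sol_path G k F Vm Fp" "simple_graph G" "1 \<le> m" "\<forall>x\<in>verts G - F. deg G x \<le> m + 2"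
  shows "int m * int (card Fp) + potential G F \<le> 3 * int m * int (card Vm)"
  using assms
proof (induction arbitrary: m rule: sol_path.induct)
  case (step0 k G F)
  then show ?case by (simp add: potential_def)
next
  case (step1 k v G F Vm Fp)
  let ?G' = "del_verts G {v}"
  have "verts ?G' - (F - {v}) = verts ?G' - F" by auto
  then have "\<forall>x\<in>verts ?G' - (F - {v}). deg ?G' x \<le> m + 2"
    using free_deg_bound_del_verts[OF step1.prems(1,3)] by simp
  then have "int m * int (card Fp) + potential ?G' (F - {v}) \<le> 3 * int m * int (card Vm)"
    using step1.IH[OF simple_graph_del_verts[OF step1.prems(1)] step1.prems(2)] by blast
  then show ?case using potential_del_low_deg[OF step1.prems(1) step1.hyps(2,3), of F] by linarith
next
  case (step2 k G v F Vm Fp)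
  show ?case
  proof (rule potential_bound_del_free_vertex[OF step2.prems(1) step2.hyps(4) _ step2.prems(2)])
    show "deg G v \<le> m + 2" using step2.hyps(4) step2.prems(3) by blast
    show "Vm \<subseteq> verts (del_verts G {v})" using sol_path_subset[OF step2.hyps(6)] .
    show "int m * int (card Fp) + potential (del_verts G {v}) F \<le> 3 * int m * int (card Vm)"
      using step2.IH[OF simple_graph_del_verts[OF step2.prems(1)] step2.prems(2)
          free_deg_bound_del_verts[OF step2.prems(1,3)]] .
  qed
next
  case (step4 G k F v X)
  have min_deg: "\<forall>x\<in>verts G. 2 \<le> deg G x" and "\<forall>x\<in>verts G - F. deg G x \<le> 2"
    using step4.hyps(1,2) unfolding reaches_step3_def by auto
  then have "potential G F \<le> 2 * int (card X)"
    using potential_le_loop_result[OF step4.hyps(3) step4.prems(1)] by blast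
  moreover have "2 * int (card X) \<le> 3 * int m * int (card X)"
    using mult_right_mono[of 2 "3 * int m" "int (card X)"] step4.prems(2) by simp
  ultimately show ?case by simp
next
  case (step5 G k F v Vm Fp)
  have v: "v \<in> verts G - F" using step5.hyps(1) unfolding reaches_step3_def by blast
  show ?case
  proof (rule potential_bound_del_free_vertex[OF step5.prems(1) v _ step5.prems(2)])
    show "deg G v \<le> m + 2" using v step5.prems(3) by blast
    show "Vm \<subseteq> verts (del_verts G {v})" using sol_path_subset[OF step5.hyps(3)] .
    show "int m * int (card Fp) + potential (del_verts G {v}) F \<le> 3 * int m * int (card Vm)"
      using step5.IH[OF simple_graph_del_verts[OF step5.prems(1)] step5.prems(2)
          free_deg_bound_del_verts[OF step5.prems(1,3)]] .
  qed
next
  case (step6 G k F v Vm Fp)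
  have v: "v \<in> verts G - F" and min_deg: "\<forall>x\<in>verts G. 2 \<le> deg G x"
    and max_deg: "\<forall>x\<in>verts G - F. deg G x \<le> deg G v"
    using step6.hyps(1) unfolding reaches_step3_def by auto
  have "deg G v \<le> m + 2" using v step6.prems(3) by blast
  define d where "d = deg G v - 2"
  have deg_v: "deg G v = d + 2" and "1 \<le> d" and "d \<le> m"
    using v min_deg step6.hyps(2) \<open>deg G v \<le> m + 2\<close> unfolding d_def by auto
  have "\<forall>x\<in>verts G - insert v F. deg G x \<le> d + 2" using max_deg deg_v by auto
  then have "int d * int (card Fp) + potential G (insert v F) \<le> 3 * int d * int (card Vm)"
    using step6.IH[OF step6.prems(1) \<open>1 \<le> d\<close>] by blast
  then show ?case
    using potential_bound_branch_vertex[OF finite_verts[OF step6.prems(1)] v deg_v]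
      \<open>1 \<le> d\<close> \<open>d \<le> m\<close> min_deg by blast
qed

lemma sol_path_from_empty_bound:
  "sol_path G k F Vm Fp \<Longrightarrow> simple_graph G \<Longrightarrow> F = {} \<Longrightarrow> card Fp \<le> 3 * card Vm"
proof (induction rule: sol_path.induct)
  case (step1 k v G F Vm Fp)
  have "F - {v} = {}" using step1.prems(2) by simp
  then show ?case using step1.IH[OF simple_graph_del_verts[OF step1.prems(1)]] by simp
next
  case (step2 k G v F Vm Fp)
  then show ?case by (simp add: two_nbrs_same_comp_def same_comp_def)
next
  case (step5 G k F v Vm Fp)
  have "card (insert v Vm) = Suc (card Vm)"
    using card_insert_del_verts[OF step5.prems(1) sol_path_subset[OF step5.hyps(3)]] .
  moreover have "card Fp \<le> 3 * card Vm"
    using step5.IH[OF simple_graph_del_verts[OF step5.prems(1)] step5.prems(2)] .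
  ultimately show ?case by simp
next
  case (step6 G k F v Vm Fp)
  have v: "v \<in> verts G" and min_deg: "\<forall>x\<in>verts G. 2 \<le> deg G x"
    and max_deg: "\<forall>x\<in>verts G. deg G x \<le> deg G v"
    using step6.hyps(1) step6.prems(2) unfolding reaches_step3_def by auto
  define m where "m = deg G v - 2"
  have deg_v: "deg G v = m + 2" and "1 \<le> m"
    using v min_deg step6.hyps(2) unfolding m_def by auto
  have "\<forall>x\<in>verts G - {v}. deg G x \<le> m + 2" using max_deg deg_v by auto
  then have "int m * int (card Fp) + potential G (insert v F) \<le> 3 * int m * int (card Vm)"
    using sol_path_potential_bound step6.hyps(3) step6.prems \<open>1 \<le> m\<close> by simp
  then have "int m * int (card (insert v Fp)) + potential G F \<le> 3 * int m * int (card Vm)"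
    using potential_bound_branch_vertex[OF finite_verts[OF step6.prems(1)] _ deg_v]
      v \<open>1 \<le> m\<close> min_deg step6.prems(2) by blast
  then have "int m * int (card (insert v Fp)) \<le> int m * (3 * int (card Vm))"
    using potential_empty[OF min_deg] step6.prems(2) by (simp add: algebra_simps)
  then show ?case using \<open>1 \<le> m\<close> by simp
qed simp_all

theorem mainTheorem6:
  fixes G :: "'a graph" and k :: int and Vm Fp :: "'a set"
  assumes "simple_graph G"
    and "sol_path G k {} Vm Fp"
  shows "card Fp \<le> 3 * card Vm"
  using sol_path_from_empty_bound[OF assms(2,1)] by simp

end
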